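(* Let $h$ be a nonzero integer and let $\boldsymbol{\alpha}$ be a smooth section of $\gamma_h$. Then $$\mathbf{J}_\parallel\boldsymbol{\alpha}=(\mathcal{P}\circ\mathbf{S})\boldsymbol{\alpha},\qquad \mathbf{J}_\perp\boldsymbol{\alpha}=(\mathcal{P}\circ\mathbf{L})\boldsymbol{\alpha},$$ i.e. componentwise $J_{\parallel,a}=\mathcal{P}\circ S_a$ and $J_{\perp,a}=\mathcal{P}\circ L_a$ for $a=x,y,z$. In particular $$\mathbf{J}=(\hat{\mathbf{k}}\cdot\mathbf{J})\hat{\mathbf{k}}+\mathcal{P}\circ\mathbf{L}.$$
   Context: Momentum space is $\mathcal{L}_+\cong\mathbb{R}^3\setminus\{0\}$, with points $\mathbf{k}$ and $\hat{\mathbf{k}}=\mathbf{k}/|\mathbf{k}|$. For each $\mathbf{k}$, let $(\mathbf{E}_1,\mathbf{E}_2,\hat{\mathbf{k}})$ be any right-handed orthonormal basis of $\mathbb{R}^3$; the line $\gamma_\pm(\mathbf{k})=\{c(\mathbf{E}_1\pm i\mathbf{E}_2):c\in\mathbb{C}\}\subset\mathbb{C}^3$ is independent of this choice, and these lines form the complex line bundles $\gamma_+$ (right) and $\gamma_-$ (left) over $\mathcal{L}_+$. For a nonzero integer $h$, $\gamma_h$ is the line bundle with fiber $\gamma_h(\mathbf{k})=\gamma_\pm(\mathbf{k})^{\otimes|h|}\subset(\mathbb{C}^3)^{\otimes|h|}$, the sign being that of $h$. A rotation $R\in\mathrm{SO}(3)$ acts on sections by $(R\boldsymbol{\alpha})(\mathbf{k})=R^{\otimes|h|}\boldsymbol{\alpha}(R^{-1}\mathbf{k})$.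 The total angular momentum $\mathbf{J}$ is defined, for a unit vector $\hat{\mathbf{v}}$, by $[(\hat{\mathbf{v}}\cdot\mathbf{J})\boldsymbol{\alpha}](\mathbf{k})=i\frac{d}{d\psi}\big|_{\psi=0}\mathbf{R}^{\psi}_{\hat{\mathbf{v}}}\boldsymbol{\alpha}(\mathbf{R}^{-\psi}_{\hat{\mathbf{v}}}\mathbf{k})$, where $\mathbf{R}^\psi_{\hat{\mathbf{v}}}$ is rotation by angle $\psi$ about $\hat{\mathbf{v}}$ (acting as $(\mathbf{R}^\psi_{\hat{\mathbf{v}}})^{\otimes|h|}$ on fibers). Define $\mathbf{J}_\parallel=(\hat{\mathbf{k}}\cdot\mathbf{J})\hat{\mathbf{k}}$ (i.e. $(J_{\parallel,a}\boldsymbol{\alpha})(\mathbf{k})=\hat k_a\,((\hat{\mathbf{k}}\cdot\mathbf{J})\boldsymbol{\alpha})(\mathbf{k})$) and $\mathbf{J}_\perp=\mathbf{J}-\mathbf{J}_\parallel$. $\mathbf{S}$ is the spin-1 operator on $\mathbb{C}^3$, $(S_a)_{bc}=-i\epsilon_{abc}$, and $\mathbf{L}=-i\,\mathbf{k}\times\nabla_{\mathbf{k}}$ is the orbital operator acting componentwise on $\mathbb{C}^3$-valued functions (in spherical coordinates $\mathbf{L}=-i(\hat{\mathbf{e}}_\phi\partial_\theta-\hat{\mathbf{e}}_\theta\frac{1}{\sin\theta}\partial_\phi)$). On $(\mathbb{C}^3)^{\otimes|h|}$-valued functions, $\mathbf{S}$ and $\mathbf{L}$ act by the Leibniz rule: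 $\mathbf{S}(\mathbf{v}_1\otimes\cdots\otimes\mathbf{v}_{|h|})=\sum_m\mathbf{v}_1\otimes\cdots\otimes\mathbf{S}\mathbf{v}_m\otimes\cdots\otimes\mathbf{v}_{|h|}$, and $\mathcal{P}$ denotes pointwise orthogonal projection of $(\mathbb{C}^3)^{\otimes|h|}$ onto $\gamma_h(\mathbf{k})$ (for $|h|=1$, projection of $\mathbb{C}^3$ onto $\gamma_\pm(\mathbf{k})$, which annihilates $\hat{\mathbf{k}}$-components); for $|h|>1$, $\mathcal{P}\circ\mathbf{S}$ and $\mathcal{P}\circ\mathbf{L}$ are defined on products of sections of $\gamma_\pm$ by the same Leibniz rule applied with the $|h|=1$ projected operators. *)

theory Defs
  imports "HOL-Analysis.Analysis" "HOL-Analysis.Cross3"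
begin

(* Momentum vectors: real^3.  A rank-n tensor in (C^3)^{\<otimes>n} is represented by its
   component function on index lists of length n (entries of the list range over the
   index type 3 = {x,y,z}); values on lists of other lengths are irrelevant. *)
type_synonym tensor = "3 list \<Rightarrow> complex"

definition Idx :: "nat \<Rightarrow> 3 list set" where
  "Idx n = {xs. length xs = n}"

definition khat :: "real^3 \<Rightarrow> real^3" where
  "khat k = (1 / norm k) *\<^sub>R k"

definition eps :: "3 \<Rightarrow> 3 \<Rightarrow> 3 \<Rightarrow> real" where
  "eps a b c = (cross3 (axis a 1) (axis b 1)) $ c"

definition rhONB :: "real^3 \<Rightarrow> real^3 \<Rightarrow> real^3 \<Rightarrow> bool" where
  "rhONB E1 E2 u \<longleftrightarrow> norm E1 = 1 \<and> norm E2 = 1 \<and> norm u = 1 \<and>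
     inner E1 E2 = 0 \<and> inner E1 u = 0 \<and> inner E2 u = 0 \<and> cross3 E1 E2 = u"

definition pol :: "int \<Rightarrow> real^3 \<Rightarrow> real^3 \<Rightarrow> 3 \<Rightarrow> complex" where
  "pol s E1 E2 j = complex_of_real (E1 $ j) + \<i> * of_int s * complex_of_real (E2 $ j)"

definition tpow :: "(3 \<Rightarrow> complex) \<Rightarrow> tensor" where
  "tpow e xs = prod_list (map e xs)"

definition fiber :: "int \<Rightarrow> real^3 \<Rightarrow> tensor set" where
  "fiber h k = {T. \<exists>E1 E2 c. rhONB E1 E2 (khat k) \<and>
      (\<forall>xs\<in>Idx (nat \<bar>h\<bar>). T xs = c * tpow (pol (sgn h) E1 E2) xs)}"

fun Ck_on :: "nat \<Rightarrow> (real^3) set \<Rightarrow> (real^3 \<Rightarrow> complex) \<Rightarrow> bool" where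
  "Ck_on 0 S f = continuous_on S f"
| "Ck_on (Suc m) S f = (f differentiable_on S \<and>
      (\<forall>c. Ck_on m S (\<lambda>k. frechet_derivative f (at k) (axis c 1))))"

definition smooth_on3 :: "(real^3) set \<Rightarrow> (real^3 \<Rightarrow> complex) \<Rightarrow> bool" where
  "smooth_on3 S f \<longleftrightarrow> (\<forall>m. Ck_on m S f)"

definition is_section :: "int \<Rightarrow> (real^3 \<Rightarrow> tensor) \<Rightarrow> bool" where
  "is_section h \<alpha> \<longleftrightarrow> (\<forall>k. k \<noteq> 0 \<longrightarrow> \<alpha> k \<in> fiber h k) \<and>
      (\<forall>xs\<in>Idx (nat \<bar>h\<bar>). smooth_on3 (- {0}) (\<lambda>k. \<alpha> k xs))"

(* rotation by angle psi about the unit vector v (Rodrigues formula) *)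
definition rotv :: "real^3 \<Rightarrow> real \<Rightarrow> real^3 \<Rightarrow> real^3" where
  "rotv v \<psi> w = cos \<psi> *\<^sub>R w + sin \<psi> *\<^sub>R cross3 v w + ((1 - cos \<psi>) * inner v w) *\<^sub>R v"

definition rotT :: "nat \<Rightarrow> real^3 \<Rightarrow> real \<Rightarrow> tensor \<Rightarrow> tensor" where
  "rotT n v \<psi> T xs = (\<Sum>ys\<in>Idx n.
      (\<Prod>m<n. complex_of_real (rotv v \<psi> (axis (ys ! m) 1) $ (xs ! m))) * T ys)"

definition Jv :: "int \<Rightarrow> real^3 \<Rightarrow> (real^3 \<Rightarrow> tensor) \<Rightarrow> real^3 \<Rightarrow> tensor" where
  "Jv h v \<alpha> k xs = \<i> * vector_derivative
      (\<lambda>\<psi>. rotT (nat \<bar>h\<bar>) v \<psi> (\<alpha> (rotv v (- \<psi>) k)) xs) (at 0)"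

definition Jc :: "int \<Rightarrow> 3 \<Rightarrow> (real^3 \<Rightarrow> tensor) \<Rightarrow> real^3 \<Rightarrow> tensor" where
  "Jc h a \<alpha> = Jv h (axis a 1) \<alpha>"

definition Jpar :: "int \<Rightarrow> 3 \<Rightarrow> (real^3 \<Rightarrow> tensor) \<Rightarrow> real^3 \<Rightarrow> tensor" where
  "Jpar h a \<alpha> k xs = complex_of_real (khat k $ a) * Jv h (khat k) \<alpha> k xs"

definition Jperp :: "int \<Rightarrow> 3 \<Rightarrow> (real^3 \<Rightarrow> tensor) \<Rightarrow> real^3 \<Rightarrow> tensor" where
  "Jperp h a \<alpha> k xs = Jc h a \<alpha> k xs - Jpar h a \<alpha> k xs"

(* S_a on rank-n tensors, Leibniz rule, (S_a)_{bc} = -i eps_{abc} *)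
definition Sop :: "nat \<Rightarrow> 3 \<Rightarrow> tensor \<Rightarrow> tensor" where
  "Sop n a T xs = (\<Sum>m<n. \<Sum>c\<in>UNIV. - \<i> * complex_of_real (eps a (xs ! m) c) * T (xs[m := c]))"

definition pd :: "3 \<Rightarrow> (real^3 \<Rightarrow> complex) \<Rightarrow> real^3 \<Rightarrow> complex" where
  "pd c g k = vector_derivative (\<lambda>t. g (k + t *\<^sub>R axis c 1)) (at 0)"

definition Lop :: "3 \<Rightarrow> (real^3 \<Rightarrow> tensor) \<Rightarrow> real^3 \<Rightarrow> tensor" where
  "Lop a \<alpha> k xs = - \<i> * (\<Sum>b\<in>UNIV. \<Sum>c\<in>UNIV.
      complex_of_real (eps a b c * k $ b) * pd c (\<lambda>k'. \<alpha> k' xs) k)"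

(* pointwise orthogonal projection of (C^3)^{\<otimes>n} onto gamma_h(k) = span of u = (E1 +- iE2)^{\<otimes>n} *)
definition Proj :: "int \<Rightarrow> real^3 \<Rightarrow> tensor \<Rightarrow> tensor" where
  "Proj h k T xs =
     (let F = (SOME F. rhONB (fst F) (snd F) (khat k));
          u = tpow (pol (sgn h) (fst F) (snd F));
          n = nat \<bar>h\<bar>
      in (\<Sum>ys\<in>Idx n. cnj (u ys) * T ys) / (\<Sum>ys\<in>Idx n. cnj (u ys) * u ys) * u xs)"

definition PS :: "int \<Rightarrow> 3 \<Rightarrow> (real^3 \<Rightarrow> tensor) \<Rightarrow> real^3 \<Rightarrow> tensor" where
  "PS h a \<alpha> k = Proj h k (Sop (nat \<bar>h\<bar>) a (\<alpha> k))"

definition PL :: "int \<Rightarrow> 3 \<Rightarrow> (real^3 \<Rightarrow> tensor) \<Rightarrow> real^3 \<Rightarrow> tensor" where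
  "PL h a \<alpha> k = Proj h k (Lop a \<alpha> k)"

end

theory Submission
  imports Defs
begin

text \<open>
  Rotating a section together with its base point, \<open>\<psi> \<mapsto> R(\<psi>) \<alpha>(R(-\<psi>) k)\<close>, gives a curve
  in the single fibre over \<open>k\<close>, because rotations carry right-handed frames adapted to
  \<open>R(-\<psi>) k\<close> to frames adapted to \<open>k\<close>. By the product rule for the action on tensors and the
  chain rule for the argument, \<open>i\<close> times its derivative at \<open>\<psi> = 0\<close> is \<open>(S\<^sub>v + L\<^sub>v) \<alpha>(k)\<close>;
  being tangent to a line, this derivative lies in the fibre, so \<open>P\<close> fixes \<open>(v \<cdot> J) \<alpha>\<close>.
  On the fibre, spanned by the \<open>|h|\<close>-th tensor power of \<open>E\<^sub>1 \<plusminus> i E\<^sub>2\<close>, a direct computation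
  gives \<open>P \<circ> S\<^sub>v = h (v \<cdot> khat k)\<close>. As \<open>L\<close> along \<open>khat k\<close> vanishes, \<open>(khat k \<cdot> J) \<alpha> = h \<alpha>\<close>,
  which is \<open>J\<^sub>\<parallel> = P \<circ> S\<close>; and then \<open>J\<^sub>\<perp> = P \<circ> J - P \<circ> S = P \<circ> L\<close>.
\<close>

section \<open>Index lists and tensor powers\<close>

lemma Idx_Suc: "Idx (Suc n) = (\<lambda>(y, ys). y # ys) ` (UNIV \<times> Idx n)"
  unfolding Idx_def by (auto simp: image_iff length_Suc_conv)

lemma finite_Idx [simp]: "finite (Idx n)"
  by (induction n) (simp_all add: Idx_Suc, simp add: Idx_def)

lemma sum_Idx_prod_nth:
  "(\<Sum>ys\<in>Idx n. \<Prod>m<n. f m (ys ! m)) = (\<Prod>m<n. \<Sum>y\<in>UNIV. (f m y :: 'a::comm_semiring_1))"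
proof (induction n arbitrary: f)
  case 0
  then show ?case by (simp add: Idx_def)
next
  case (Suc n)
  have inj: "inj_on (\<lambda>(y, ys). y # ys) (UNIV \<times> Idx n)" by (auto simp: inj_on_def)
  have "(\<Sum>ys\<in>Idx (Suc n). \<Prod>m<Suc n. f m (ys ! m))
      = (\<Sum>(y, ys)\<in>UNIV \<times> Idx n. f 0 y * (\<Prod>m<n. f (Suc m) (ys ! m)))"
    unfolding Idx_Suc sum.reindex[OF inj]
    by (simp add: case_prod_beta prod.lessThan_Suc_shift del: prod.lessThan_Suc)
  also have "\<dots> = (\<Sum>y\<in>UNIV. f 0 y) * (\<Prod>m<n. \<Sum>y\<in>UNIV. f (Suc m) y)"
    by (simp add: sum_product sum.cartesian_product Suc.IH[of "\<lambda>m. f (Suc m)", symmetric])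
  also have "\<dots> = (\<Prod>m<Suc n. \<Sum>y\<in>UNIV. f m y)"
    by (simp add: prod.lessThan_Suc_shift del: prod.lessThan_Suc)
  finally show ?case .
qed

lemma prod_indicator:
  "finite I \<Longrightarrow> (\<Prod>i\<in>I. if P i then 1 else (0::'a::comm_semiring_1)) = (if \<forall>i\<in>I. P i then 1 else 0)"
  by (induction I rule: finite_induct) auto

lemma prod_nth_indicator_Idx:
  assumes "ys \<in> Idx n" "xs \<in> Idx n"
  shows "(\<Prod>m<n. if ys ! m = xs ! m then 1 else (0::'a::comm_semiring_1)) = (if ys = xs then 1 else 0)"
proof -
  have "(\<forall>m\<in>{..<n}. ys ! m = xs ! m) \<longleftrightarrow> ys = xs"
    using assms unfolding Idx_def by (auto intro: nth_equalityI)
  then show ?thesis by (simp add: prod_indicator)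
qed

lemma sum_Idx_agree_off_slot:
  fixes g :: "3 \<Rightarrow> 'a::comm_semiring_1" and T :: "3 list \<Rightarrow> 'a"
  assumes m: "m < n" and xs: "xs \<in> Idx n"
  shows "(\<Sum>ys\<in>Idx n. g (ys ! m) * (\<Prod>j\<in>{..<n} - {m}. if ys ! j = xs ! j then 1 else 0) * T ys)
       = (\<Sum>c\<in>UNIV. g c * T (xs[m := c]))"
proof -
  let ?S = "range (\<lambda>c. xs[m := c])"
  have lx: "length xs = n" using xs by (simp add: Idx_def)
  have agree_iff: "(\<forall>j\<in>{..<n} - {m}. ys ! j = xs ! j) \<longleftrightarrow> ys \<in> ?S" if "ys \<in> Idx n" for ys
  proof
    assume "\<forall>j\<in>{..<n} - {m}. ys ! j = xs ! j"
    then have "ys = xs[m := ys ! m]"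
      using that lx m by (intro nth_equalityI) (auto simp: Idx_def nth_list_update)
    then show "ys \<in> ?S" by blast
  qed (use lx m in \<open>auto simp: nth_list_update split: if_splits\<close>)
  have inj: "inj (\<lambda>c. xs[m := c])"
    using m lx by (auto simp: inj_def dest: arg_cong[where f="\<lambda>l. l ! m"])
  have "(\<Sum>ys\<in>Idx n. g (ys ! m) * (\<Prod>j\<in>{..<n} - {m}. if ys ! j = xs ! j then 1 else 0) * T ys)
      = (\<Sum>ys\<in>Idx n. if ys \<in> ?S then g (ys ! m) * T ys else 0)"
    by (intro sum.cong refl) (simp add: prod_indicator agree_iff)
  also have "\<dots> = (\<Sum>ys\<in>Idx n \<inter> ?S. g (ys ! m) * T ys)"
    by (simp add: sum.inter_restrict)
  also have "Idx n \<inter> ?S = ?S" using lx by (auto simp: Idx_def)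
  also have "(\<Sum>ys\<in>?S. g (ys ! m) * T ys) = (\<Sum>c\<in>UNIV. g c * T (xs[m := c]))"
    using m lx by (simp add: sum.reindex[OF inj])
  finally show ?thesis .
qed

lemma tpow_conv_prod: "ys \<in> Idx n \<Longrightarrow> tpow e ys = (\<Prod>m<n. e (ys ! m))"
proof -
  have "tpow e ys = (\<Prod>m<length ys. e (ys ! m))" for ys
    unfolding tpow_def
    by (induction ys) (simp_all add: prod.lessThan_Suc_shift del: prod.lessThan_Suc)
  then show "ys \<in> Idx n \<Longrightarrow> tpow e ys = (\<Prod>m<n. e (ys ! m))"
    by (simp add: Idx_def)
qed

lemma tpow_mult_const: "ys \<in> Idx n \<Longrightarrow> tpow (\<lambda>j. c * e j) ys = c ^ n * tpow e ys"
  by (simp add: tpow_conv_prod prod.distrib)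

section \<open>Rotations\<close>

lemma rotv_0 [simp]: "rotv v 0 w = w"
  by (simp add: rotv_def)

lemma rotv_scaleR: "rotv v p (r *\<^sub>R w) = r *\<^sub>R rotv v p w"
  by (simp add: rotv_def cross_mult_right algebra_simps)

lemma rotv_component: "rotv v p w $ x = (\<Sum>y\<in>UNIV. w $ y * rotv v p (axis y 1) $ x)"
  using exhaust_3[of x] by (elim disjE) (simp_all add: rotv_def cross3_simps sum_3 axis_def)

lemma cross3_component: "cross3 v w $ x = (\<Sum>y\<in>UNIV. w $ y * cross3 v (axis y 1) $ x)"
  using exhaust_3[of x] by (elim disjE) (simp_all add: cross3_simps sum_3 axis_def)

lemma inner_rotv:
  assumes "norm v = 1"
  shows "inner (rotv v p a) (rotv v p b) = inner a b"
proof -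
  have vv: "inner v v = 1" using assms by (simp add: norm_eq_1)
  have "inner (cross3 v a) b = - inner a (cross3 v b)"
    "inner (cross3 v a) v = 0" "inner v (cross3 v b) = 0"
    by (simp_all add: cross3_simps forall_3)
  moreover have "inner (cross3 v a) (cross3 v b) = inner a b - inner v a * inner v b"
    using vv by (simp add: dot_cross inner_commute)
  moreover have "cos p * cos p + sin p * sin p = 1" by simp
  ultimately show ?thesis unfolding rotv_def
    by (simp only: inner_add_left inner_add_right inner_scaleR_left inner_scaleR_right
        vv inner_commute[of a v]) algebra
qed

lemma norm_rotv: "norm v = 1 \<Longrightarrow> norm (rotv v p w) = norm w"
  by (simp add: norm_eq_sqrt_inner inner_rotv)

lemma rotv_rotv_uminus:
  assumes "norm v = 1"
  shows "rotv v p (rotv v (- p) k) = k"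
proof -
  have vv: "inner v v = 1" using assms by (simp add: norm_eq_1)
  have "cross3 v (cross3 v k) = inner v k *\<^sub>R v - k" using vv by (simp add: Lagrange)
  moreover have "inner v (cross3 v k) = 0" by (simp add: cross3_simps forall_3)
  moreover have "cos p * cos p + sin p * sin p = 1" by simp
  ultimately show ?thesis unfolding rotv_def
    apply (simp only: cross_add_right cross_mult_right inner_add_right inner_scaleR_right vv
        cross_refl cos_minus sin_minus right_diff_distrib scaleR_zero_right)
    apply (simp only: vec_eq_iff forall_3 vector_add_component vector_scaleR_component
        vector_minus_component vector_uminus_component zero_index real_scaleR_def)
    by (intro conjI; algebra)
qed

lemma cross3_rotv:
  assumes "norm v = 1"
  shows "cross3 (rotv v p a) (rotv v p b) = rotv v p (cross3 a b)"
proof -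
  have vv: "inner v v = 1" using assms by (simp add: norm_eq_1)
  define q where "q = inner v (cross3 a b)"
  have expand: "cross3 a (cross3 v b) = inner a b *\<^sub>R v - inner v a *\<^sub>R b"
    "cross3 (cross3 v a) b = inner v b *\<^sub>R a - inner a b *\<^sub>R v"
    "cross3 (cross3 v a) (cross3 v b) = q *\<^sub>R v"
    "cross3 v (cross3 a b) = inner v b *\<^sub>R a - inner v a *\<^sub>R b"
    "cross3 a v = - cross3 v a"
    unfolding q_def by (simp_all add: cross3_simps forall_3)
  have expand_unit: "cross3 (cross3 v a) v = a - inner v a *\<^sub>R v"
    "cross3 v (cross3 v b) = inner v b *\<^sub>R v - b"
    using vv by (simp_all add: Lagrange cross_skew[of "cross3 v a" v])
  have decompose: "cross3 a b = - inner v b *\<^sub>R cross3 v a + inner v a *\<^sub>R cross3 v b + q *\<^sub>R v"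
  proof -
    have "inner v v *\<^sub>R cross3 a b
        = inner v b *\<^sub>R cross3 a v + inner v a *\<^sub>R cross3 v b + inner v (cross3 a b) *\<^sub>R v"
      by (simp add: cross3_simps forall_3)
    then show ?thesis using vv expand(5) unfolding q_def by simp
  qed
  show ?thesis unfolding rotv_def
    apply (simp only: cross_add_right cross_add_left cross_mult_right cross_mult_left expand expand_unit
        q_def[symmetric] cross_refl scaleR_zero_right cross_zero_left cross_zero_right)
    apply (simp only: decompose)
    apply (simp only: vec_eq_iff forall_3 vector_add_component vector_scaleR_component
        vector_minus_component vector_uminus_component zero_index real_scaleR_def)
    using sin_cos_squared_add3[of p] by (intro conjI; algebra)
qed

lemma khat_rotv: "norm v = 1 \<Longrightarrow> khat (rotv v p w) = rotv v p (khat w)"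
  by (simp add: khat_def norm_rotv rotv_scaleR)

lemma rhONB_rotv:
  assumes "norm v = 1" "rhONB E1 E2 u"
  shows "rhONB (rotv v p E1) (rotv v p E2) (rotv v p u)"
  using assms unfolding rhONB_def by (simp add: norm_rotv inner_rotv cross3_rotv)

lemma has_vector_derivative_rotv_component:
  "((\<lambda>p. complex_of_real (rotv v p w $ x)) has_vector_derivative complex_of_real (cross3 v w $ x)) (at 0)"
proof -
  have "((\<lambda>p. rotv v p w $ x) has_field_derivative
     (- sin 0 * w $ x + cos 0 * cross3 v w $ x + sin 0 * inner v w * v $ x)) (at 0)"
    unfolding rotv_def by (auto intro!: derivative_eq_intros)
  then show ?thesis by (auto intro: has_vector_derivative_of_real)
qed

lemma has_vector_derivative_rotv_orbit:
  "((\<lambda>p. rotv v (- p) k) has_vector_derivative - cross3 v k) (at 0)"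
proof -
  have "((\<lambda>p. rotv v (- p) k) has_vector_derivative
     (- sin 0 *\<^sub>R k + (- cos 0) *\<^sub>R cross3 v k + (sin 0 * inner v k) *\<^sub>R v)) (at 0)"
    unfolding rotv_def by (auto intro!: derivative_eq_intros)
  then show ?thesis by simp
qed

section \<open>Right-handed frames and polarization vectors\<close>

lemma rhONB_cross:
  assumes "rhONB E1 E2 u"
  shows "cross3 u E1 = E2" "cross3 u E2 = - E1"
proof -
  have "inner E1 E1 = 1" "inner E2 E2 = 1" "inner E1 E2 = 0" and u: "u = cross3 E1 E2"
    using assms unfolding rhONB_def by (auto simp: norm_eq_1)
  then show "cross3 u E1 = E2" "cross3 u E2 = - E1"
    unfolding u by (simp_all add: cross_skew[of "cross3 E1 E2"] Lagrange inner_commute)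
qed

lemma rhONB_expansion:
  assumes "rhONB E1 E2 u"
  shows "w = inner w E1 *\<^sub>R E1 + inner w E2 *\<^sub>R E2 + inner w u *\<^sub>R u"
proof -
  have "inner u u = 1" using assms unfolding rhONB_def by (simp add: norm_eq_1)
  then have "w - inner u w *\<^sub>R u = cross3 u (cross3 w u)" by (simp add: Lagrange)
  also have "u = cross3 E1 E2" using assms unfolding rhONB_def by simp
  then have "cross3 w u = inner w E2 *\<^sub>R E1 - inner w E1 *\<^sub>R E2" by (simp add: Lagrange)
  finally have "w - inner u w *\<^sub>R u = inner w E2 *\<^sub>R E2 + inner w E1 *\<^sub>R E1"
    using rhONB_cross[OF assms] by (simp add: Cross3.right_diff_distrib cross_mult_right)
  then show ?thesis by (simp add: algebra_simps inner_commute)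
qed

lemma pol_frame_change:
  assumes E: "rhONB E1 E2 u" and F: "rhONB F1 F2 u" and s: "s * s = (1::int)"
  shows "pol s F1 F2 j
    = (complex_of_real (inner F1 E1) - \<i> * of_int s * complex_of_real (inner F1 E2)) * pol s E1 E2 j"
proof -
  define a where "a = inner F1 E1"
  define b where "b = inner F1 E2"
  have "inner F1 u = 0" using F unfolding rhONB_def by simp
  then have F1: "F1 = a *\<^sub>R E1 + b *\<^sub>R E2"
    using rhONB_expansion[OF E, of F1] unfolding a_def b_def by simp
  have F2: "F2 = a *\<^sub>R E2 - b *\<^sub>R E1"
    using rhONB_cross[OF F] rhONB_cross[OF E] unfolding F1
    by (simp add: cross_add_right cross_mult_right)
  have "pol s F1 F2 j = of_real (a * E1 $ j + b * E2 $ j) + \<i> * of_int s * of_real (a * E2 $ j - b * E1 $ j)"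
    unfolding pol_def by (subst F2, subst F1, simp)
  also have "(of_int s :: complex) * of_int s = 1" using s by (metis of_int_mult of_int_1)
  then have "of_real (a * E1 $ j + b * E2 $ j) + \<i> * of_int s * of_real (a * E2 $ j - b * E1 $ j)
      = (of_real a - \<i> * of_int s * of_real b) * pol s E1 E2 j"
    unfolding pol_def by (simp add: algebra_simps)
  finally show ?thesis unfolding a_def b_def .
qed

lemma pol_linear_image:
  assumes "\<And>w. f w $ x = (\<Sum>y\<in>UNIV. w $ y * f (axis y 1) $ x)"
  shows "(\<Sum>y\<in>UNIV. complex_of_real (f (axis y 1) $ x) * pol s E1 E2 y) = pol s (f E1) (f E2) x"
  unfolding pol_def assms[of E1] assms[of E2]
  by (simp add: sum.distrib algebra_simps sum_distrib_left)

lemma sum_cnj_pol_mult_pol: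
  assumes "rhONB E1 E2 u" "s * s = (1::int)"
  shows "(\<Sum>y\<in>UNIV. cnj (pol s E1 E2 y) * pol s E1 E2 y) = 2"
proof -
  have s: "(of_int s :: real) * of_int s = 1" using assms(2) by (metis of_int_mult of_int_1)
  have "cnj (pol s E1 E2 y) * pol s E1 E2 y = of_real (E1 $ y * E1 $ y + E2 $ y * E2 $ y)" for y
    unfolding pol_def using s by (simp add: complex_eq_iff algebra_simps)
  then have "(\<Sum>y\<in>UNIV. cnj (pol s E1 E2 y) * pol s E1 E2 y) = of_real (inner E1 E1 + inner E2 E2)"
    by (simp add: inner_vec_def sum.distrib)
  also have "\<dots> = 2" using assms(1) unfolding rhONB_def by (simp add: norm_eq_1)
  finally show ?thesis .
qed

lemma sum_cnj_pol_mult_pol_cross3: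
  assumes F: "rhONB F1 F2 u" and s: "s * s = (1::int)"
  shows "(\<Sum>y\<in>UNIV. cnj (pol s F1 F2 y) * pol s (cross3 v F1) (cross3 v F2) y)
     = - 2 * \<i> * of_int s * of_real (inner v u)"
proof -
  have s': "(of_int s :: real) * of_int s = 1" using s by (metis of_int_mult of_int_1)
  let ?G1 = "cross3 v F1" and ?G2 = "cross3 v F2"
  have "cnj (pol s F1 F2 y) * pol s ?G1 ?G2 y = of_real (F1 $ y * ?G1 $ y + F2 $ y * ?G2 $ y)
      + \<i> * of_int s * of_real (F1 $ y * ?G2 $ y - F2 $ y * ?G1 $ y)" for y
    unfolding pol_def using s' by (simp add: complex_eq_iff algebra_simps)
  then have "(\<Sum>y\<in>UNIV. cnj (pol s F1 F2 y) * pol s ?G1 ?G2 y)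
     = of_real (inner F1 ?G1 + inner F2 ?G2) + \<i> * of_int s * of_real (inner F1 ?G2 - inner F2 ?G1)"
    by (simp add: inner_vec_def sum.distrib sum_subtractf sum_distrib_left right_diff_distrib)
  moreover have "u = cross3 F1 F2" using F unfolding rhONB_def by simp
  then have "inner F1 ?G1 = 0" "inner F2 ?G2 = 0" "inner F1 ?G2 = - inner v u" "inner F2 ?G1 = inner v u"
    by (simp_all add: cross3_simps)
  ultimately show ?thesis by simp
qed

section \<open>Fibres and the projection\<close>

definition tinner :: "nat \<Rightarrow> tensor \<Rightarrow> tensor \<Rightarrow> complex" where
  "tinner n T T' = (\<Sum>ys\<in>Idx n. cnj (T ys) * T' ys)"

text \<open>\<open>Proj\<close> makes the same choice of frame; \<open>fiber_gen\<close> spans the fibre only when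
  an adapted frame exists, which the lemmas below obtain from a point of the fibre.\<close>

definition frame :: "real^3 \<Rightarrow> (real^3) \<times> (real^3)" where
  "frame k = (SOME F. rhONB (fst F) (snd F) (khat k))"

definition fiber_gen :: "int \<Rightarrow> real^3 \<Rightarrow> tensor" where
  "fiber_gen h k = tpow (pol (sgn h) (fst (frame k)) (snd (frame k)))"

lemma Proj_conv_tinner:
  "Proj h k T xs = tinner (nat \<bar>h\<bar>) (fiber_gen h k) T / tinner (nat \<bar>h\<bar>) (fiber_gen h k) (fiber_gen h k)
     * fiber_gen h k xs"
  unfolding Proj_def fiber_gen_def frame_def tinner_def Let_def by simp

lemma tinner_cong: "\<forall>ys\<in>Idx n. T ys = T' ys \<Longrightarrow> tinner n u T = tinner n u T'"
  unfolding tinner_def by simp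

lemma tinner_mult_right: "\<forall>ys\<in>Idx n. T ys = c * T' ys \<Longrightarrow> tinner n u T = c * tinner n u T'"
  unfolding tinner_def by (simp add: sum_distrib_left algebra_simps)

lemma Proj_cong: "\<forall>ys\<in>Idx (nat \<bar>h\<bar>). T ys = T' ys \<Longrightarrow> Proj h k T xs = Proj h k T' xs"
  unfolding Proj_conv_tinner by (metis tinner_cong)

lemma Proj_diff: "Proj h k (\<lambda>ys. T ys - T' ys) xs = Proj h k T xs - Proj h k T' xs"
  unfolding Proj_conv_tinner tinner_def by (simp add: sum_subtractf algebra_simps diff_divide_distrib)

lemma Proj_mult: "Proj h k (\<lambda>ys. c * T ys) xs = c * Proj h k T xs"
  unfolding Proj_conv_tinner tinner_def by (simp add: sum_distrib_left algebra_simps)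

lemma sgn_mult_sgn: "h \<noteq> 0 \<Longrightarrow> sgn h * sgn h = (1::int)"
  by (simp add: sgn_if)

lemma rhONB_frame: "rhONB E1 E2 (khat k) \<Longrightarrow> rhONB (fst (frame k)) (snd (frame k)) (khat k)"
  unfolding frame_def by (rule someI_ex[where P="\<lambda>F. rhONB (fst F) (snd F) (khat k)"]) auto

lemma tinner_tpow_pol:
  assumes "rhONB E1 E2 u" "s * s = (1::int)"
  shows "tinner n (tpow (pol s E1 E2)) (tpow (pol s E1 E2)) = 2 ^ n"
proof -
  let ?e = "pol s E1 E2"
  have "tinner n (tpow ?e) (tpow ?e) = (\<Sum>ys\<in>Idx n. \<Prod>m<n. cnj (?e (ys ! m)) * ?e (ys ! m))"
    unfolding tinner_def by (intro sum.cong refl) (simp add: tpow_conv_prod prod.distrib)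
  also have "\<dots> = (\<Prod>m<n. \<Sum>y\<in>UNIV. cnj (?e y) * ?e y)" by (rule sum_Idx_prod_nth)
  also have "\<dots> = 2 ^ n" using sum_cnj_pol_mult_pol[OF assms] by simp
  finally show ?thesis .
qed

lemma tinner_fiber_gen:
  assumes "h \<noteq> 0" "rhONB E1 E2 (khat k)"
  shows "tinner n (fiber_gen h k) (fiber_gen h k) = 2 ^ n"
  unfolding fiber_gen_def by (rule tinner_tpow_pol[OF rhONB_frame[OF assms(2)] sgn_mult_sgn[OF assms(1)]])

lemma fiber_multiple_fiber_gen:
  assumes "h \<noteq> 0" "T \<in> fiber h k"
  obtains c where "\<forall>xs\<in>Idx (nat \<bar>h\<bar>). T xs = c * fiber_gen h k xs"
proof -
  obtain E1 E2 c where E: "rhONB E1 E2 (khat k)"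
    and T: "\<forall>xs\<in>Idx (nat \<bar>h\<bar>). T xs = c * tpow (pol (sgn h) E1 E2) xs"
    using assms(2) unfolding fiber_def by blast
  define F where "F = frame k"
  define phase where "phase = complex_of_real (inner E1 (fst F)) - \<i> * of_int (sgn h) * complex_of_real (inner E1 (snd F))"
  have "pol (sgn h) E1 E2 = (\<lambda>j. phase * pol (sgn h) (fst F) (snd F) j)"
    using pol_frame_change[OF rhONB_frame[OF E] E sgn_mult_sgn[OF assms(1)]] unfolding phase_def F_def by auto
  then have "\<forall>xs\<in>Idx (nat \<bar>h\<bar>). T xs = (c * phase ^ nat \<bar>h\<bar>) * fiber_gen h k xs"
    using T unfolding fiber_gen_def F_def by (simp add: tpow_mult_const)
  then show ?thesis by (rule that)
qed

lemma rotT_tpow_pol: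
  assumes "xs \<in> Idx n"
  shows "rotT n v p (tpow (pol s E1 E2)) xs = tpow (pol s (rotv v p E1) (rotv v p E2)) xs"
proof -
  have "rotT n v p (tpow (pol s E1 E2)) xs
      = (\<Sum>ys\<in>Idx n. \<Prod>m<n. complex_of_real (rotv v p (axis (ys ! m) 1) $ (xs ! m)) * pol s E1 E2 (ys ! m))"
    unfolding rotT_def by (intro sum.cong refl) (simp add: tpow_conv_prod prod.distrib)
  also have "\<dots> = (\<Prod>m<n. \<Sum>y\<in>UNIV. complex_of_real (rotv v p (axis y 1) $ (xs ! m)) * pol s E1 E2 y)"
    by (rule sum_Idx_prod_nth)
  also have "\<dots> = (\<Prod>m<n. pol s (rotv v p E1) (rotv v p E2) (xs ! m))"
    by (simp add: pol_linear_image[of "rotv v p", OF rotv_component])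
  finally show ?thesis using assms by (simp add: tpow_conv_prod)
qed

lemma rotT_fiber:
  assumes "norm v = 1" "T \<in> fiber h (rotv v (- p) k)"
  shows "rotT (nat \<bar>h\<bar>) v p T \<in> fiber h k"
proof -
  obtain E1 E2 c where E: "rhONB E1 E2 (khat (rotv v (- p) k))"
    and T: "\<forall>xs\<in>Idx (nat \<bar>h\<bar>). T xs = c * tpow (pol (sgn h) E1 E2) xs"
    using assms(2) unfolding fiber_def by blast
  have "rotv v p (khat (rotv v (- p) k)) = khat k"
    using khat_rotv[OF assms(1)] rotv_rotv_uminus[OF assms(1)] by metis
  then have "rhONB (rotv v p E1) (rotv v p E2) (khat k)"
    using rhONB_rotv[OF assms(1) E, of p] by simp
  moreover have "rotT (nat \<bar>h\<bar>) v p T xs = c * tpow (pol (sgn h) (rotv v p E1) (rotv v p E2)) xs"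
    if "xs \<in> Idx (nat \<bar>h\<bar>)" for xs
  proof -
    have "rotT (nat \<bar>h\<bar>) v p T xs = c * rotT (nat \<bar>h\<bar>) v p (tpow (pol (sgn h) E1 E2)) xs"
      unfolding rotT_def using T by (simp add: sum_distrib_left algebra_simps)
    then show ?thesis using rotT_tpow_pol[OF that] by simp
  qed
  ultimately show ?thesis unfolding fiber_def by blast
qed

section \<open>Generators of the rotation action\<close>

text \<open>The derivatives at \<open>\<psi> = 0\<close> of \<open>R(\<psi>)\<^sup>\<otimes>\<^sup>n T\<close> and of \<open>\<alpha>(R(-\<psi>) k)\<close>, for rotations \<open>R(\<psi>)\<close>
  about \<open>v\<close>.\<close>

definition spin_gen :: "nat \<Rightarrow> real^3 \<Rightarrow> tensor \<Rightarrow> tensor" where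
  "spin_gen n v T xs = (\<Sum>m<n. \<Sum>c\<in>UNIV. complex_of_real (cross3 v (axis c 1) $ (xs ! m)) * T (xs[m := c]))"

definition orbital_gen :: "real^3 \<Rightarrow> (real^3 \<Rightarrow> tensor) \<Rightarrow> real^3 \<Rightarrow> tensor" where
  "orbital_gen v \<alpha> k xs = - (\<Sum>c\<in>UNIV. complex_of_real (cross3 v k $ c) * pd c (\<lambda>k'. \<alpha> k' xs) k)"

lemma cross3_axis_axis_component: "cross3 (axis a 1) (axis c 1) $ b = - eps a b c"
  unfolding eps_def using exhaust_3[of a] exhaust_3[of b] exhaust_3[of c]
  by (elim disjE) (simp_all add: cross3_simps axis_def)

lemma cross3_axis_component: "cross3 (axis a 1) k $ c = (\<Sum>b\<in>UNIV. eps a b c * k $ b)"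
  unfolding eps_def using exhaust_3[of a] exhaust_3[of c]
  by (elim disjE) (simp_all add: cross3_simps axis_def sum_3)

lemma Sop_eq_spin_gen: "Sop n a T xs = \<i> * spin_gen n (axis a 1) T xs"
  unfolding Sop_def spin_gen_def cross3_axis_axis_component by (simp add: sum_distrib_left algebra_simps)

lemma Lop_eq_orbital_gen: "Lop a \<alpha> k xs = \<i> * orbital_gen (axis a 1) \<alpha> k xs"
proof -
  have "(\<Sum>b\<in>UNIV. \<Sum>c\<in>UNIV. complex_of_real (eps a b c * k $ b) * pd c (\<lambda>k'. \<alpha> k' xs) k)
      = (\<Sum>c\<in>UNIV. complex_of_real (\<Sum>b\<in>UNIV. eps a b c * k $ b) * pd c (\<lambda>k'. \<alpha> k' xs) k)"
    unfolding of_real_sum sum_distrib_right by (rule sum.swap)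
  then show ?thesis unfolding Lop_def orbital_gen_def cross3_axis_component by simp
qed

lemma complex_of_real_axis_component: "complex_of_real (axis y 1 $ x) = (if y = x then 1 else 0)"
  by (simp add: axis_def)

lemma rotT_0:
  assumes "xs \<in> Idx n"
  shows "rotT n v 0 T xs = T xs"
proof -
  have "(\<Prod>m<n. complex_of_real (axis (ys ! m) 1 $ (xs ! m))) = (if ys = xs then 1 else 0)"
    if "ys \<in> Idx n" for ys
    using prod_nth_indicator_Idx[OF that assms] by (simp add: complex_of_real_axis_component)
  then have "rotT n v 0 T xs = (\<Sum>ys\<in>Idx n. if ys = xs then T ys else 0)"
    unfolding rotT_def by (intro sum.cong refl) simp
  then show ?thesis using assms by simp
qed

definition spin_coeff :: "nat \<Rightarrow> real^3 \<Rightarrow> 3 list \<Rightarrow> 3 list \<Rightarrow> complex" where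
  "spin_coeff n v xs ys = (\<Sum>i<n. complex_of_real (cross3 v (axis (ys ! i) 1) $ (xs ! i))
      * (\<Prod>j\<in>{..<n} - {i}. if ys ! j = xs ! j then 1 else 0))"

lemma has_vector_derivative_rotT_coeff:
  "((\<lambda>p. \<Prod>m<n. complex_of_real (rotv v p (axis (ys ! m) 1) $ (xs ! m))) has_vector_derivative
      spin_coeff n v xs ys) (at 0)"
proof -
  have "((\<lambda>p. \<Prod>m<n. complex_of_real (rotv v p (axis (ys ! m) 1) $ (xs ! m))) has_derivative
      (\<lambda>t. \<Sum>i<n. (t *\<^sub>R complex_of_real (cross3 v (axis (ys ! i) 1) $ (xs ! i)))
          * (\<Prod>j\<in>{..<n} - {i}. complex_of_real (rotv v 0 (axis (ys ! j) 1) $ (xs ! j))))) (at 0)"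
    by (rule has_derivative_prod)
      (use has_vector_derivative_rotv_component in \<open>auto simp: has_vector_derivative_def\<close>)
  then show ?thesis
    by (simp add: has_vector_derivative_def spin_coeff_def scaleR_sum_right mult_scaleR_left
        complex_of_real_axis_component)
qed

lemma spin_gen_conv_spin_coeff:
  assumes xs: "xs \<in> Idx n"
  shows "spin_gen n v T xs = (\<Sum>ys\<in>Idx n. spin_coeff n v xs ys * T ys)"
proof -
  have "(\<Sum>ys\<in>Idx n. spin_coeff n v xs ys * T ys)
      = (\<Sum>i<n. \<Sum>ys\<in>Idx n. complex_of_real (cross3 v (axis (ys ! i) 1) $ (xs ! i))
          * (\<Prod>j\<in>{..<n} - {i}. if ys ! j = xs ! j then 1 else 0) * T ys)"
    unfolding spin_coeff_def by (simp add: sum_distrib_right sum.swap[of _ "Idx n"])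
  also have "\<dots> = spin_gen n v T xs"
    unfolding spin_gen_def by (intro sum.cong refl sum_Idx_agree_off_slot[OF _ xs]) simp
  finally show ?thesis by simp
qed

lemma pd_eq_derivative:
  assumes "(g has_derivative D) (at k)"
  shows "pd c g k = D (axis c 1)"
proof -
  have "((\<lambda>t. k + t *\<^sub>R axis c 1) has_vector_derivative axis c 1) (at 0)"
    by (auto intro!: derivative_eq_intros)
  moreover have "(g has_derivative D)
      (at ((\<lambda>t. k + t *\<^sub>R axis c (1::real)) 0) within range (\<lambda>t. k + t *\<^sub>R axis c 1))"
    using assms by (simp add: has_derivative_at_withinI)
  ultimately have "((g \<circ> (\<lambda>t. k + t *\<^sub>R axis c 1)) has_vector_derivative D (axis c 1)) (at 0)"
    using vector_derivative_diff_chain_within[where S=UNIV] by fastforce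
  then show ?thesis unfolding pd_def by (simp add: o_def vector_derivative_at)
qed

lemma has_vector_derivative_along_orbit:
  fixes g :: "real^3 \<Rightarrow> complex"
  assumes "(g has_derivative D) (at k)"
  shows "((\<lambda>p. g (rotv v (- p) k)) has_vector_derivative
      - (\<Sum>c\<in>UNIV. complex_of_real (cross3 v k $ c) * pd c g k)) (at 0)"
proof -
  have "(g has_derivative D) (at ((\<lambda>p. rotv v (- p) k) 0) within range (\<lambda>p. rotv v (- p) k))"
    using assms by (simp add: has_derivative_at_withinI)
  then have "((g \<circ> (\<lambda>p. rotv v (- p) k)) has_vector_derivative D (- cross3 v k)) (at 0)"
    using vector_derivative_diff_chain_within[OF has_vector_derivative_rotv_orbit[of v k,
          unfolded at_within_open[OF _ open_UNIV, symmetric]]]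
    by (metis at_within_open[OF _ open_UNIV] UNIV_I)
  moreover have "D (- cross3 v k) = - (\<Sum>c\<in>UNIV. complex_of_real (cross3 v k $ c) * pd c g k)"
  proof -
    have lin: "linear D" using has_derivative_linear[OF assms] .
    have "cross3 v k = (\<Sum>c\<in>UNIV. (cross3 v k $ c) *\<^sub>R axis c (1::real))"
      by (simp add: vec_eq_iff sum_3 axis_def forall_3)
    then have "D (- cross3 v k) = - D (\<Sum>c\<in>UNIV. (cross3 v k $ c) *\<^sub>R axis c (1::real))"
      using lin by (metis linear_neg)
    also have "\<dots> = - (\<Sum>c\<in>UNIV. (cross3 v k $ c) *\<^sub>R D (axis c 1))"
      using lin by (simp add: linear_sum linear_cmul o_def)
    finally show ?thesis by (simp add: pd_eq_derivative[OF assms] scaleR_conv_of_real)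
  qed
  ultimately show ?thesis by (simp add: o_def)
qed

lemma has_vector_derivative_rotT_orbit:
  assumes diff: "\<forall>ys\<in>Idx n. (\<lambda>k. \<alpha> k ys) differentiable (at k)" and xs: "xs \<in> Idx n"
  shows "((\<lambda>p. rotT n v p (\<alpha> (rotv v (- p) k)) xs) has_vector_derivative
           spin_gen n v (\<alpha> k) xs + orbital_gen v \<alpha> k xs) (at 0)"
proof -
  have orbit: "((\<lambda>p. \<alpha> (rotv v (- p) k) ys) has_vector_derivative orbital_gen v \<alpha> k ys) (at 0)"
    if ys: "ys \<in> Idx n" for ys
  proof -
    obtain D where D: "((\<lambda>k. \<alpha> k ys) has_derivative D) (at k)"
      using diff ys unfolding differentiable_def by blast
    show ?thesis unfolding orbital_gen_def by (rule has_vector_derivative_along_orbit[OF D])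
  qed
  have "((\<lambda>p. rotT n v p (\<alpha> (rotv v (- p) k)) xs) has_vector_derivative
      (\<Sum>ys\<in>Idx n. (\<Prod>m<n. complex_of_real (rotv v 0 (axis (ys ! m) 1) $ (xs ! m))) * orbital_gen v \<alpha> k ys
        + spin_coeff n v xs ys * \<alpha> (rotv v (- 0) k) ys)) (at 0)"
    unfolding rotT_def
    by (intro has_vector_derivative_sum has_vector_derivative_mult has_vector_derivative_rotT_coeff orbit)
  moreover have "(\<Sum>ys\<in>Idx n. (\<Prod>m<n. complex_of_real (rotv v 0 (axis (ys ! m) 1) $ (xs ! m)))
      * orbital_gen v \<alpha> k ys) = orbital_gen v \<alpha> k xs"
    using rotT_0[OF xs, of v "orbital_gen v \<alpha> k"] unfolding rotT_def .
  ultimately show ?thesis by (simp add: sum.distrib add.commute spin_gen_conv_spin_coeff[OF xs])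
qed

lemma Jv_eq_spin_gen_orbital_gen:
  assumes "\<forall>ys\<in>Idx (nat \<bar>h\<bar>). (\<lambda>k. \<alpha> k ys) differentiable (at k)" "xs \<in> Idx (nat \<bar>h\<bar>)"
  shows "Jv h v \<alpha> k xs = \<i> * (spin_gen (nat \<bar>h\<bar>) v (\<alpha> k) xs + orbital_gen v \<alpha> k xs)"
  unfolding Jv_def using vector_derivative_at[OF has_vector_derivative_rotT_orbit[OF assms]] by simp

section \<open>Projection of the angular momentum\<close>

lemma section_in_fiber: "is_section h \<alpha> \<Longrightarrow> k \<noteq> 0 \<Longrightarrow> \<alpha> k \<in> fiber h k"
  unfolding is_section_def by blast

lemma section_differentiable:
  assumes "is_section h \<alpha>" "k \<noteq> 0"
  shows "\<forall>ys\<in>Idx (nat \<bar>h\<bar>). (\<lambda>k. \<alpha> k ys) differentiable (at k)"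
proof
  fix ys assume "ys \<in> Idx (nat \<bar>h\<bar>)"
  then have "Ck_on (Suc 0) (- {0}) (\<lambda>k. \<alpha> k ys)"
    using assms(1) unfolding is_section_def smooth_on3_def by blast
  then show "(\<lambda>k. \<alpha> k ys) differentiable (at k)"
    using assms(2) differentiable_on_eq_differentiable_at[of "- {0}"] by auto
qed

lemma line_curve_derivative:
  fixes f :: "real \<Rightarrow> tensor"
  assumes line: "\<forall>p. \<exists>c. \<forall>ys\<in>Idx n. f p ys = c * u ys"
    and u: "tinner n u u \<noteq> 0"
    and f': "\<forall>ys\<in>Idx n. ((\<lambda>p. f p ys) has_vector_derivative f' ys) (at 0)"
    and xs: "xs \<in> Idx n"
  shows "f' xs = tinner n u f' / tinner n u u * u xs"
proof -
  define g where "g p = tinner n u (f p) / tinner n u u" for p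
  have "f p xs = g p * u xs" for p
  proof -
    obtain c where c: "\<forall>ys\<in>Idx n. f p ys = c * u ys" using line by blast
    then have "g p = c" unfolding g_def tinner_mult_right[OF c] using u by simp
    then show ?thesis using c xs by simp
  qed
  moreover have "(g has_vector_derivative tinner n u f' / tinner n u u) (at 0)"
    unfolding g_def tinner_def divide_inverse
    by (intro has_vector_derivative_mult_left has_vector_derivative_sum has_vector_derivative_mult_right)
      (use f' in auto)
  then have "((\<lambda>p. g p * u xs) has_vector_derivative tinner n u f' / tinner n u u * u xs) (at 0)"
    by (rule has_vector_derivative_mult_left)
  ultimately have "((\<lambda>p. f p xs) has_vector_derivative tinner n u f' / tinner n u u * u xs) (at 0)"
    by simp
  then show ?thesis using f' xs vector_derivative_unique_at by blast
qed

lemma Proj_Jv: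
  assumes h: "h \<noteq> 0" and \<alpha>: "is_section h \<alpha>" and k: "k \<noteq> 0" and v: "norm v = 1"
    and xs: "xs \<in> Idx (nat \<bar>h\<bar>)"
  shows "Proj h k (Jv h v \<alpha> k) xs = Jv h v \<alpha> k xs"
proof -
  let ?n = "nat \<bar>h\<bar>" and ?D = "\<lambda>ys. spin_gen (nat \<bar>h\<bar>) v (\<alpha> k) ys + orbital_gen v \<alpha> k ys"
  note diff = section_differentiable[OF \<alpha> k]
  have line: "\<forall>p. \<exists>c. \<forall>ys\<in>Idx ?n. rotT ?n v p (\<alpha> (rotv v (- p) k)) ys = c * fiber_gen h k ys"
  proof
    fix p
    have "rotv v (- p) k \<noteq> 0" using norm_rotv[OF v, of "- p" k] k by auto
    then have "rotT ?n v p (\<alpha> (rotv v (- p) k)) \<in> fiber h k"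
      by (rule rotT_fiber[OF v section_in_fiber[OF \<alpha>]])
    then obtain c where "\<forall>ys\<in>Idx ?n. rotT ?n v p (\<alpha> (rotv v (- p) k)) ys = c * fiber_gen h k ys"
      by (rule fiber_multiple_fiber_gen[OF h])
    then show "\<exists>c. \<forall>ys\<in>Idx ?n. rotT ?n v p (\<alpha> (rotv v (- p) k)) ys = c * fiber_gen h k ys" ..
  qed
  obtain E1 E2 where "rhONB E1 E2 (khat k)" using section_in_fiber[OF \<alpha> k] unfolding fiber_def by blast
  then have "tinner ?n (fiber_gen h k) (fiber_gen h k) \<noteq> 0" using tinner_fiber_gen[OF h] by simp
  then have "Proj h k ?D xs = ?D xs"
    using line_curve_derivative[OF line _ _ xs] has_vector_derivative_rotT_orbit[OF diff]
    unfolding Proj_conv_tinner by simp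
  moreover have "Proj h k (Jv h v \<alpha> k) xs = Proj h k (\<lambda>ys. \<i> * ?D ys) xs"
    by (rule Proj_cong) (simp add: Jv_eq_spin_gen_orbital_gen[OF diff])
  moreover have "Proj h k (\<lambda>ys. \<i> * ?D ys) xs = \<i> * Proj h k ?D xs" by (rule Proj_mult)
  ultimately show ?thesis using Jv_eq_spin_gen_orbital_gen[OF diff xs] by simp
qed

section \<open>The spin operator on a fibre\<close>

lemma tinner_tpow_update_slot:
  fixes e :: "3 \<Rightarrow> complex" and d :: "3 \<Rightarrow> 3 \<Rightarrow> complex"
  assumes m: "m < n"
  shows "(\<Sum>ys\<in>Idx n. cnj (tpow e ys) * (\<Sum>c\<in>UNIV. d c (ys ! m) * tpow e (ys[m := c])))
    = (\<Sum>y\<in>UNIV. cnj (e y) * (\<Sum>c\<in>UNIV. d c y * e c)) * (\<Sum>y\<in>UNIV. cnj (e y) * e y) ^ (n - 1)"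
proof -
  define G where "G j y = (if j = m then cnj (e y) * (\<Sum>c\<in>UNIV. d c y * e c) else cnj (e y) * e y)"
    for j y
  have split: "(\<Prod>j<n. f j) = f m * (\<Prod>j\<in>{..<n} - {m}. f j)" for f :: "nat \<Rightarrow> complex"
    by (rule prod.remove) (use m in auto)
  have "cnj (tpow e ys) * (\<Sum>c\<in>UNIV. d c (ys ! m) * tpow e (ys[m := c])) = (\<Prod>j<n. G j (ys ! j))"
    if ys: "ys \<in> Idx n" for ys
  proof -
    define R where "R = (\<Prod>j\<in>{..<n} - {m}. e (ys ! j))"
    have ly: "length ys = n" using ys by (simp add: Idx_def)
    have "tpow e (ys[m := c]) = e c * R" for c
    proof -
      have "tpow e (ys[m := c]) = e (ys[m := c] ! m) * (\<Prod>j\<in>{..<n} - {m}. e (ys[m := c] ! j))"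
        using ly by (simp add: tpow_conv_prod[of _ n] Idx_def split)
      then show ?thesis unfolding R_def using ly m by (auto intro!: prod.cong simp: nth_list_update)
    qed
    moreover have "tpow e ys = e (ys ! m) * R"
      unfolding R_def using tpow_conv_prod[OF ys] split by simp
    moreover have "(\<Prod>j<n. G j (ys ! j)) = G m (ys ! m) * (cnj R * R)"
      unfolding split R_def cnj_prod prod.distrib[symmetric] G_def by (intro arg_cong2[where f="(*)"] prod.cong) auto
    ultimately show ?thesis by (simp add: G_def sum_distrib_left mult_ac)
  qed
  then have "(\<Sum>ys\<in>Idx n. cnj (tpow e ys) * (\<Sum>c\<in>UNIV. d c (ys ! m) * tpow e (ys[m := c])))
      = (\<Sum>ys\<in>Idx n. \<Prod>j<n. G j (ys ! j))"
    by (rule sum.cong[OF refl])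
  also have "\<dots> = (\<Prod>j<n. \<Sum>y\<in>UNIV. G j y)" by (rule sum_Idx_prod_nth)
  also have "\<dots> = (\<Sum>y\<in>UNIV. G m y) * (\<Prod>j\<in>{..<n} - {m}. \<Sum>y\<in>UNIV. G j y)" by (rule split)
  also have "(\<Prod>j\<in>{..<n} - {m}. \<Sum>y\<in>UNIV. G j y) = (\<Sum>y\<in>UNIV. cnj (e y) * e y) ^ (n - 1)"
    using m by (simp add: G_def)
  finally show ?thesis by (simp add: G_def)
qed

lemma tinner_tpow_spin_gen:
  assumes F: "rhONB F1 F2 u" and s: "s * s = (1::int)"
  shows "tinner n (tpow (pol s F1 F2)) (spin_gen n v (tpow (pol s F1 F2)))
     = of_nat n * (- 2 * \<i> * of_int s * of_real (inner v u)) * 2 ^ (n - 1)"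
proof -
  let ?e = "pol s F1 F2"
  have "tinner n (tpow ?e) (spin_gen n v (tpow ?e))
      = (\<Sum>m<n. \<Sum>ys\<in>Idx n. cnj (tpow ?e ys)
          * (\<Sum>c\<in>UNIV. complex_of_real (cross3 v (axis c 1) $ (ys ! m)) * tpow ?e (ys[m := c])))"
    unfolding tinner_def spin_gen_def by (simp add: sum_distrib_left sum.swap[of _ "Idx n"])
  also have "\<dots> = (\<Sum>m<n. (- 2 * \<i> * of_int s * of_real (inner v u)) * 2 ^ (n - 1))"
  proof (intro sum.cong refl)
    fix m assume "m \<in> {..<n}"
    then show "(\<Sum>ys\<in>Idx n. cnj (tpow ?e ys)
          * (\<Sum>c\<in>UNIV. complex_of_real (cross3 v (axis c 1) $ (ys ! m)) * tpow ?e (ys[m := c])))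
        = (- 2 * \<i> * of_int s * of_real (inner v u)) * 2 ^ (n - 1)"
      by (simp add: tinner_tpow_update_slot[where d="\<lambda>c y. complex_of_real (cross3 v (axis c 1) $ y)"]
          pol_linear_image[of "cross3 v", OF cross3_component]
          sum_cnj_pol_mult_pol_cross3[OF F s] sum_cnj_pol_mult_pol[OF F s])
  qed
  finally show ?thesis by simp
qed

lemma spin_gen_cong_mult:
  assumes "\<forall>ys\<in>Idx n. T ys = c * T' ys" "xs \<in> Idx n"
  shows "spin_gen n v T xs = c * spin_gen n v T' xs"
proof -
  have "T (xs[m := y]) = c * T' (xs[m := y])" for m y
    using assms by (simp add: Idx_def)
  then show ?thesis unfolding spin_gen_def by (simp add: sum_distrib_left mult_ac)
qed

lemma Proj_spin_gen_fiber:
  assumes h: "h \<noteq> 0" and T: "T \<in> fiber h k" and xs: "xs \<in> Idx (nat \<bar>h\<bar>)"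
  shows "Proj h k (\<lambda>ys. \<i> * spin_gen (nat \<bar>h\<bar>) v T ys) xs = of_int h * of_real (inner v (khat k)) * T xs"
proof -
  let ?n = "nat \<bar>h\<bar>" and ?u = "fiber_gen h k"
  obtain c where c: "\<forall>ys\<in>Idx ?n. T ys = c * ?u ys" using fiber_multiple_fiber_gen[OF h T] .
  obtain E1 E2 where E: "rhONB E1 E2 (khat k)" using T unfolding fiber_def by blast
  have "\<forall>ys\<in>Idx ?n. \<i> * spin_gen ?n v T ys = (\<i> * c) * spin_gen ?n v ?u ys"
    using spin_gen_cong_mult[OF c] by simp
  then have "tinner ?n ?u (\<lambda>ys. \<i> * spin_gen ?n v T ys) = (\<i> * c) * tinner ?n ?u (spin_gen ?n v ?u)"
    by (rule tinner_mult_right)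
  also have "tinner ?n ?u (spin_gen ?n v ?u)
      = of_nat ?n * (- 2 * \<i> * of_int (sgn h) * of_real (inner v (khat k))) * 2 ^ (?n - 1)"
    unfolding fiber_gen_def by (rule tinner_tpow_spin_gen[OF rhONB_frame[OF E] sgn_mult_sgn[OF h]])
  finally have "Proj h k (\<lambda>ys. \<i> * spin_gen ?n v T ys) xs
      = (\<i> * c) * (of_nat ?n * (- 2 * \<i> * of_int (sgn h) * of_real (inner v (khat k))) * 2 ^ (?n - 1))
        / 2 ^ ?n * ?u xs"
    unfolding Proj_conv_tinner tinner_fiber_gen[OF h E] by (rule arg_cong[where f="\<lambda>z. z / 2 ^ ?n * ?u xs"])
  also have "(2::complex) ^ ?n = 2 * 2 ^ (?n - 1)"
    using h by (simp add: power_eq_if)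
  also have "(\<i> * c) * (of_nat ?n * (- 2 * \<i> * of_int (sgn h) * of_real (inner v (khat k))) * 2 ^ (?n - 1))
        / (2 * 2 ^ (?n - 1)) * ?u xs
      = (of_int (\<bar>h\<bar> * sgn h)) * of_real (inner v (khat k)) * (c * ?u xs)"
    by (simp add: field_simps)
  finally show ?thesis using c xs by (simp add: abs_mult_sgn)
qed

section \<open>Decomposition of the angular momentum\<close>

lemma Jv_khat:
  assumes h: "h \<noteq> 0" and \<alpha>: "is_section h \<alpha>" and k: "k \<noteq> 0" and xs: "xs \<in> Idx (nat \<bar>h\<bar>)"
  shows "Jv h (khat k) \<alpha> k xs = of_int h * \<alpha> k xs"
proof -
  let ?n = "nat \<bar>h\<bar>"
  have unit: "norm (khat k) = 1" using k unfolding khat_def by simp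
  note diff = section_differentiable[OF \<alpha> k]
  have "orbital_gen (khat k) \<alpha> k ys = 0" for ys
    unfolding orbital_gen_def khat_def by (simp add: cross_mult_left)
  then have "\<forall>ys\<in>Idx ?n. Jv h (khat k) \<alpha> k ys = \<i> * spin_gen ?n (khat k) (\<alpha> k) ys"
    using Jv_eq_spin_gen_orbital_gen[OF diff] by simp
  then have "Proj h k (Jv h (khat k) \<alpha> k) xs = Proj h k (\<lambda>ys. \<i> * spin_gen ?n (khat k) (\<alpha> k) ys) xs"
    by (rule Proj_cong)
  moreover have "inner (khat k) (khat k) = 1" using unit by (simp add: norm_eq_1)
  ultimately show ?thesis
    using Proj_Jv[OF h \<alpha> k unit xs] Proj_spin_gen_fiber[OF h section_in_fiber[OF \<alpha> k] xs] by simp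
qed

lemma PS_eq:
  assumes "h \<noteq> 0" "\<alpha> k \<in> fiber h k" "xs \<in> Idx (nat \<bar>h\<bar>)"
  shows "PS h a \<alpha> k xs = of_int h * of_real (khat k $ a) * \<alpha> k xs"
proof -
  have "PS h a \<alpha> k xs = Proj h k (\<lambda>ys. \<i> * spin_gen (nat \<bar>h\<bar>) (axis a 1) (\<alpha> k) ys) xs"
    unfolding PS_def Sop_eq_spin_gen ..
  then show ?thesis using Proj_spin_gen_fiber[OF assms] by (simp add: inner_axis')
qed

lemma Jpar_eq_PS:
  assumes "h \<noteq> 0" "is_section h \<alpha>" "k \<noteq> 0" "xs \<in> Idx (nat \<bar>h\<bar>)"
  shows "Jpar h a \<alpha> k xs = PS h a \<alpha> k xs"
  unfolding Jpar_def Jv_khat[OF assms]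
    PS_eq[where \<alpha>=\<alpha> and k=k, OF assms(1) section_in_fiber[OF assms(2,3)] assms(4)]
  by (simp add: mult_ac)

lemma Jc_eq_Sop_plus_Lop:
  assumes "\<forall>ys\<in>Idx (nat \<bar>h\<bar>). (\<lambda>k. \<alpha> k ys) differentiable (at k)" "xs \<in> Idx (nat \<bar>h\<bar>)"
  shows "Jc h a \<alpha> k xs = Sop (nat \<bar>h\<bar>) a (\<alpha> k) xs + Lop a \<alpha> k xs"
  unfolding Jc_def Jv_eq_spin_gen_orbital_gen[OF assms] Sop_eq_spin_gen Lop_eq_orbital_gen
  by (simp add: distrib_left)

lemma Jperp_eq_PL:
  assumes h: "h \<noteq> 0" and \<alpha>: "is_section h \<alpha>" and k: "k \<noteq> 0" and xs: "xs \<in> Idx (nat \<bar>h\<bar>)"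
  shows "Jperp h a \<alpha> k xs = PL h a \<alpha> k xs"
proof -
  have "\<forall>ys\<in>Idx (nat \<bar>h\<bar>). Lop a \<alpha> k ys = Jc h a \<alpha> k ys - Sop (nat \<bar>h\<bar>) a (\<alpha> k) ys"
    using Jc_eq_Sop_plus_Lop[OF section_differentiable[OF \<alpha> k]] by simp
  then have "PL h a \<alpha> k xs = Proj h k (Jc h a \<alpha> k) xs - PS h a \<alpha> k xs"
    unfolding PL_def PS_def Proj_diff[symmetric] by (rule Proj_cong)
  also have "Proj h k (Jc h a \<alpha> k) xs = Jc h a \<alpha> k xs"
    unfolding Jc_def by (rule Proj_Jv[OF h \<alpha> k _ xs]) simp
  finally show ?thesis unfolding Jperp_def Jpar_eq_PS[OF h \<alpha> k xs] by simp
qed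

theorem mainTheorem1:
  fixes h :: int and \<alpha> :: "real^3 \<Rightarrow> tensor"
  assumes "h \<noteq> 0" and "is_section h \<alpha>"
  shows "\<forall>k. k \<noteq> 0 \<longrightarrow> (\<forall>a xs. xs \<in> Idx (nat \<bar>h\<bar>) \<longrightarrow>
           Jpar h a \<alpha> k xs = PS h a \<alpha> k xs \<and>
           Jperp h a \<alpha> k xs = PL h a \<alpha> k xs \<and>
           Jc h a \<alpha> k xs = complex_of_real (khat k $ a) * Jv h (khat k) \<alpha> k xs + PL h a \<alpha> k xs)"
proof (intro allI impI conjI)
  fix k :: "real^3" and a :: 3 and xs :: "3 list"
  assume "k \<noteq> 0" and "xs \<in> Idx (nat \<bar>h\<bar>)"
  note facts = assms this
  show "Jpar h a \<alpha> k xs = PS h a \<alpha> k xs" by (rule Jpar_eq_PS[OF facts])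
  show "Jperp h a \<alpha> k xs = PL h a \<alpha> k xs" by (rule Jperp_eq_PL[OF facts])
  then show "Jc h a \<alpha> k xs = complex_of_real (khat k $ a) * Jv h (khat k) \<alpha> k xs + PL h a \<alpha> k xs"
    unfolding Jperp_def Jpar_def by (simp add: algebra_simps)
qed

end
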